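(* For integers $s,t\ge0$ let $m_{i,j}^{s,t}=\int_{(0,1)^2}\frac{x^{s+i}y^{s+j}}{x+y}\left(\frac{1-x}{1+x}\right)^t\left(\frac{1-y}{1+y}\right)^tdx\,dy$, $\phi_i^{s,t}=\sqrt2\int_0^1\frac{x^{s+i}}{1+x}\left(\frac{1-x}{1+x}\right)^tdx$, $\tau_n^{s,t}=\det(m_{i,j}^{s,t})_{i,j=0}^{n-1}$ ($\tau_0^{s,t}=1$), $$\sigma_n^{s,t}=\det\begin{pmatrix} m_{0,0}^{s,t}&\cdots&m_{0,n-1}^{s,t}&\phi_0^{s,t}\\ \vdots&&\vdots&\vdots\\ m_{n,0}^{s,t}&\cdots&m_{n,n-1}^{s,t}&\phi_n^{s,t}\end{pmatrix}\ (n\ge0),\qquad P_n^{s,t}(x)=\frac{1}{\tau_n^{s,t}}\det\begin{pmatrix} m_{0,0}^{s,t}&\cdots&m_{0,n-1}^{s,t}&1\\ \vdots&&\vdots&\vdots\\ m_{n,0}^{s,t}&\cdots&m_{n,n-1}^{s,t}&x^n\end{pmatrix},$$ $P_0^{s,t}=1$, and for $n\ge1$ with $\sigma_{n-1}^{s,t}\ne0$, $$R_n^{s,t}(x)=\frac{(-1)^{n-1}}{\sigma_{n-1}^{s,t}}\det\begin{pmatrix}\phi_0^{s,t}&m_{0,0}^{s,t}&\cdots&m_{0,n-2}^{s,t}&1\\ \phi_1^{s,t}&m_{1,0}^{s,t}&\cdots&m_{1,n-2}^{s,t}&x\\ \vdots&\vdots&&\vdots&\vdots\\ \phi_n^{s,t}&m_{n,0}^{s,t}&\cdots&m_{n,n-2}^{s,t}&x^n\end{pmatrix}.$$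 Then for every $n\ge1$ and $s,t\ge0$ with $\sigma_{n-1}^{s,t}\ne0$, $$P_n^{s,t+1}(x)=R_n^{s,t}(x)-d_n^{s,t}P_{n-1}^{s,t+1}(x),\qquad d_n^{s,t}=-\frac{\sigma_n^{s,t}\tau_{n-1}^{s,t+1}}{\sigma_{n-1}^{s,t}\tau_n^{s,t+1}}.$$
   Context: $m_{i,j}^{s,t}=\langle x^i,y^j\rangle_{s,t}$ for the bilinear form $\langle f,g\rangle_{s,t}=\int_{(0,1)^2}\frac{x^sy^s}{x+y}f(x)g(y)\left(\frac{1-x}{1+x}\right)^t\left(\frac{1-y}{1+y}\right)^tdx\,dy$, and $\phi_i^{s,t}=\mathcal L_{s,t}(x^i)$ with $\mathcal L_{s,t}(f)=\sqrt2\int_0^1\frac{x^s}{1+x}f(x)\left(\frac{1-x}{1+x}\right)^tdx$. The determinants $\tau_n^{s,t}$ are positive. The condition $\sigma_{n-1}^{s,t}\neq 0$ is only what is needed for $R_n^{s,t}$ and $d_n^{s,t}$ to be defined. *)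

theory Defs
  imports "HOL-Analysis.Analysis" "Jordan_Normal_Form.Determinant"
begin

definition mmom :: "nat \<Rightarrow> nat \<Rightarrow> nat \<Rightarrow> nat \<Rightarrow> real" where
  "mmom s t i j = (LINT p:{0<..<1::real} \<times> {0<..<1::real}|lborel.
     (fst p ^ (s + i) * snd p ^ (s + j) / (fst p + snd p)) *
     ((1 - fst p) / (1 + fst p)) ^ t * ((1 - snd p) / (1 + snd p)) ^ t)"

definition phi :: "nat \<Rightarrow> nat \<Rightarrow> nat \<Rightarrow> real" where
  "phi s t i = sqrt 2 * (LINT x:{0<..<1::real}|lborel.
     x ^ (s + i) / (1 + x) * ((1 - x) / (1 + x)) ^ t)"

definition tau :: "nat \<Rightarrow> nat \<Rightarrow> nat \<Rightarrow> real" where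
  "tau s t n = Determinant.det (Matrix.mat n n (\<lambda>(i, j). mmom s t i j))"

definition sigma :: "nat \<Rightarrow> nat \<Rightarrow> nat \<Rightarrow> real" where
  "sigma s t n = Determinant.det (Matrix.mat (n + 1) (n + 1)
     (\<lambda>(i, j). if j < n then mmom s t i j else phi s t i))"

definition Ppoly :: "nat \<Rightarrow> nat \<Rightarrow> nat \<Rightarrow> real \<Rightarrow> real" where
  "Ppoly s t n x = Determinant.det (Matrix.mat (n + 1) (n + 1)
     (\<lambda>(i, j). if j < n then mmom s t i j else x ^ i)) / tau s t n"

definition Rpoly :: "nat \<Rightarrow> nat \<Rightarrow> nat \<Rightarrow> real \<Rightarrow> real" where
  "Rpoly s t n x = (-1) ^ (n - 1) / sigma s t (n - 1) *
     Determinant.det (Matrix.mat (n + 1) (n + 1)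
     (\<lambda>(i, j). if j = 0 then phi s t i else if j < n then mmom s t i (j - 1) else x ^ i))"

definition dcoef :: "nat \<Rightarrow> nat \<Rightarrow> nat \<Rightarrow> real" where
  "dcoef s t n = - (sigma s t n * tau s (t + 1) (n - 1)) / (sigma s t (n - 1) * tau s (t + 1) n)"

end

theory Submission
  imports Defs "HOL-Probability.Sinc_Integral"
begin

text \<open>Since \<open>(1 - x) (1 - y) = (1 + x) (1 + y) - 2 (x + y)\<close>, raising the exponent \<open>t\<close> of
  the weight is a rank-one update of the moments, \<open>m(s, t + 1)\<^sub>i\<^sub>j = m(s, t)\<^sub>i\<^sub>j - \<phi>\<^sub>i \<phi>\<^sub>j\<close>.
  Column operations against the column \<open>\<phi>\<close> therefore express \<open>\<sigma>\<^sub>n\<^sub>-\<^sub>1\<close>, \<open>\<sigma>\<^sub>n\<close> and the determinant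
  defining \<open>R\<^sub>n\<close> through the moment matrix of parameter \<open>t + 1\<close> bordered by \<open>\<phi>\<close>, and the
  recurrence becomes a three-term Pluecker identity between bordered determinants.
  Dividing by \<open>\<tau>\<close> is legitimate because the moment matrices are Gram matrices of the kernel
  \<open>1 / (x + y) = \<integral>\<^sub>0\<^sup>\<infinity> exp (- r (x + y)) dr\<close>, which is positive definite: a null vector
  would give a weighted polynomial on \<open>(0, 1)\<close> all of whose Laplace transforms vanish.\<close>

section \<open>Bordered determinants\<close>

text \<open>\<open>\<sigma>\<^sub>n\<close>, \<open>\<tau>\<^sub>n P\<^sub>n\<close> and the determinant in \<open>R\<^sub>n\<close> are all of this form.\<close>
definition bordered_det :: "nat \<Rightarrow> (nat \<Rightarrow> nat \<Rightarrow> 'a::comm_ring_1) \<Rightarrow> (nat \<Rightarrow> 'a) \<Rightarrow> 'a" where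
  "bordered_det k c w =
     Determinant.det (Matrix.mat (Suc k) (Suc k) (\<lambda>(i, j). if j < k then c i j else w i))"

definition cons_col :: "(nat \<Rightarrow> 'a) \<Rightarrow> (nat \<Rightarrow> nat \<Rightarrow> 'a) \<Rightarrow> nat \<Rightarrow> nat \<Rightarrow> 'a" where
  "cons_col w c i j = (if j = 0 then w i else c i (j - 1))"

lemma det_mat_expand_col:
  fixes f :: "nat \<times> nat \<Rightarrow> 'a::comm_ring_1"
  assumes "p \<le> k"
  shows "Determinant.det (Matrix.mat (Suc k) (Suc k) f) =
    (\<Sum>i<Suc k. (-1) ^ (i + p) * f (i, p) * Determinant.det (Matrix.mat k k
       (\<lambda>(i', j'). f (if i' < i then i' else Suc i', if j' < p then j' else Suc j'))))"
proof -
  let ?A = "Matrix.mat (Suc k) (Suc k) f"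
  have delete: "mat_delete ?A i p = Matrix.mat k k
      (\<lambda>(i', j'). f (if i' < i then i' else Suc i', if j' < p then j' else Suc j'))" for i
    unfolding mat_delete_def by (rule cong_mat) auto
  have "Determinant.det ?A = (\<Sum>i<Suc k. ?A $$ (i, p) * cofactor ?A i p)"
    using assms by (intro laplace_expansion_column) auto
  also have "\<dots> = (\<Sum>i<Suc k. (-1) ^ (i + p) * f (i, p) * Determinant.det (Matrix.mat k k
       (\<lambda>(i', j'). f (if i' < i then i' else Suc i', if j' < p then j' else Suc j'))))"
    using assms by (intro sum.cong refl) (simp add: cofactor_def delete)
  finally show ?thesis .
qed

lemma bordered_det_expand_last_col:
  "bordered_det k c w = (\<Sum>i<Suc k. (-1) ^ (i + k) * w i *
     Determinant.det (Matrix.mat k k (\<lambda>(i', j). c (if i' < i then i' else Suc i') j)))"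
  unfolding bordered_det_def det_mat_expand_col[OF order_refl]
  by (intro sum.cong refl arg_cong2[where f = "(*)"] arg_cong[where f = Determinant.det] cong_mat)
     auto

lemma bordered_det_linear:
  obtains g where "\<And>w. bordered_det k c w = (\<Sum>i<Suc k. w i * g i)"
  by (rule that[of "\<lambda>i. (-1) ^ (i + k) *
      Determinant.det (Matrix.mat k k (\<lambda>(i', j). c (if i' < i then i' else Suc i') j))"])
    (simp add: bordered_det_expand_last_col ac_simps)

lemma bordered_det_repeated_col:
  assumes "j < k"
  shows "bordered_det k c (\<lambda>i. c i j) = 0"
  unfolding bordered_det_def
  using assms by (intro det_identical_columns[of _ "Suc k" j k]) (auto intro!: eq_vecI)

lemma bordered_det_unit_col:
  "bordered_det k c (\<lambda>i. if i = k then 1 else 0) = Determinant.det (Matrix.mat k k (\<lambda>(i, j). c i j))"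
proof -
  have "bordered_det k c (\<lambda>i. if i = k then 1 else 0) =
      Determinant.det (Matrix.mat k k (\<lambda>(i', j). c (if i' < k then i' else Suc i') j))"
    by (simp add: bordered_det_expand_last_col lessThan_Suc power_add[symmetric] flip: mult_2)
  also have "\<dots> = Determinant.det (Matrix.mat k k (\<lambda>(i, j). c i j))"
    by (intro arg_cong[where f = Determinant.det] cong_mat) auto
  finally show ?thesis .
qed

lemma det_mat_cons_col:
  "Determinant.det (Matrix.mat (Suc k) (Suc k) (\<lambda>(i, j). cons_col w c i j)) =
     (-1) ^ k * bordered_det k c w"
proof -
  have sign: "(-1) ^ k * ((-1) ^ (i + k) * x) = (-1 :: 'a) ^ i * x" for i x
  proof -
    have "(-1) ^ k * ((-1) ^ (i + k) * x) = (-1) ^ i * ((-1) ^ k * ((-1 :: 'a) ^ k * x))"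
      by (simp only: power_add ac_simps)
    then show ?thesis by simp
  qed
  have "Determinant.det (Matrix.mat (Suc k) (Suc k) (\<lambda>(i, j). cons_col w c i j)) =
      (\<Sum>i<Suc k. (-1) ^ i * w i *
         Determinant.det (Matrix.mat k k (\<lambda>(i', j). c (if i' < i then i' else Suc i') j)))"
    unfolding det_mat_expand_col[OF le0] by (simp add: cons_col_def)
  also have "\<dots> = (-1) ^ k * bordered_det k c w"
    unfolding bordered_det_expand_last_col sum_distrib_left by (simp add: sign mult.assoc)
  finally show ?thesis .
qed

lemma linear_form_zero_if_zero_on_nonsingular_columns:
  fixes B :: "nat \<Rightarrow> nat \<Rightarrow> 'a::field"
  assumes "Determinant.det (Matrix.mat N N (\<lambda>(i, j). B i j)) \<noteq> 0"
    and F: "\<And>v. F v = (\<Sum>i<N. v i * g i)"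
    and "\<And>j. j < N \<Longrightarrow> F (\<lambda>i. B i j) = 0"
  shows "F v = 0"
proof -
  let ?B = "Matrix.mat N N (\<lambda>(i, j). B i j)"
  have "Determinant.det (transpose_mat ?B) \<noteq> 0"
    using assms(1) det_transpose[of ?B N] by simp
  moreover have "transpose_mat ?B *\<^sub>v vec N g = 0\<^sub>v N"
  proof (rule eq_vecI)
    fix j assume "j < dim_vec (0\<^sub>v N :: 'a vec)"
    then show "(transpose_mat ?B *\<^sub>v vec N g) $ j = 0\<^sub>v N $ j"
      using assms(3)[of j] by (simp add: F mult_mat_vec_def scalar_prod_def atLeast0LessThan)
  qed simp
  moreover have "transpose_mat ?B \<in> carrier_mat N N"
    by simp
  ultimately have "vec N g = 0\<^sub>v N"
    using det_0_iff_vec_prod_zero_field[of "transpose_mat ?B" N] vec_carrier[of N g] by blast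
  then have "g i = 0" if "i < N" for i
    using that by (metis index_vec index_zero_vec(1))
  then show ?thesis
    by (simp add: F)
qed

lemma bordered_det_pluecker:
  fixes c :: "nat \<Rightarrow> nat \<Rightarrow> 'a::field"
  assumes "bordered_det k c w \<noteq> 0"
  shows "bordered_det k c w * bordered_det (Suc k) c v =
    (-1) ^ k * Determinant.det (Matrix.mat (Suc k) (Suc k) (\<lambda>(i, j). c i j)) *
      bordered_det (Suc k) (cons_col w c) v
    + bordered_det (Suc k) c w * bordered_det k c v"
proof -
  let ?T = "Determinant.det (Matrix.mat (Suc k) (Suc k) (\<lambda>(i, j). c i j))"
  define F where "F v = bordered_det k c w * bordered_det (Suc k) c v
    - (-1) ^ k * ?T * bordered_det (Suc k) (cons_col w c) v - bordered_det (Suc k) c w * bordered_det k c v"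
    for v
  obtain gD where gD: "\<And>v. bordered_det (Suc k) c v = (\<Sum>i<Suc (Suc k). v i * gD i)"
    using bordered_det_linear[of "Suc k" c] by blast
  obtain gE where gE: "\<And>v. bordered_det (Suc k) (cons_col w c) v = (\<Sum>i<Suc (Suc k). v i * gE i)"
    using bordered_det_linear[of "Suc k" "cons_col w c"] by blast
  obtain gM where gM: "\<And>v. bordered_det k c v = (\<Sum>i<Suc k. v i * gM i)"
    using bordered_det_linear[of k c] by blast
  define g where "g i = bordered_det k c w * gD i - (-1) ^ k * ?T * gE i
    - bordered_det (Suc k) c w * (if i < Suc k then gM i else 0)" for i
  have F_linear: "F v = (\<Sum>i<Suc (Suc k). v i * g i)" for v
    unfolding F_def gD[of v] gE[of v] gM[of v] g_def lessThan_Suc[of "Suc k"]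
    by (simp add: sum_distrib_left sum_subtractf sum.distrib algebra_simps)
  text \<open>The columns of \<open>c\<close> before \<open>k\<close>, then \<open>w\<close>, then the last unit vector: they span
    because their determinant is \<open>bordered_det k c w\<close>, and \<open>F\<close> vanishes on each of them.\<close>
  define B where "B i j = (if j < k then c i j else if j = k then w i else if i = Suc k then 1 else 0)"
    for i j
  have "Determinant.det (Matrix.mat (Suc (Suc k)) (Suc (Suc k)) (\<lambda>(i, j). B i j)) =
      bordered_det (Suc k) (\<lambda>i j. if j < k then c i j else w i) (\<lambda>i. if i = Suc k then 1 else 0)"
    unfolding bordered_det_def B_def by (intro arg_cong[where f = Determinant.det] cong_mat) auto
  also have "\<dots> = bordered_det k c w"
    unfolding bordered_det_unit_col bordered_det_def
    by (intro arg_cong[where f = Determinant.det] cong_mat) auto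
  finally have det_B: "Determinant.det (Matrix.mat (Suc (Suc k)) (Suc (Suc k)) (\<lambda>(i, j). B i j)) \<noteq> 0"
    using assms by simp
  have F_col: "F (\<lambda>i. c i j) = 0" if "j < k" for j
  proof -
    have "cons_col w c i (Suc j) = c i j" for i
      by (simp add: cons_col_def)
    then have "bordered_det (Suc k) (cons_col w c) (\<lambda>i. c i j) = 0"
      using bordered_det_repeated_col[of "Suc j" "Suc k" "cons_col w c"] that by simp
    then show ?thesis
      using that by (simp add: F_def bordered_det_repeated_col)
  qed
  have F_w: "F w = 0"
    using bordered_det_repeated_col[of 0 "Suc k" "cons_col w c"] by (simp add: F_def cons_col_def)
  have F_unit: "F (\<lambda>i. if i = Suc k then 1 else 0) = 0"
  proof -
    have "bordered_det k c (\<lambda>i. if i = Suc k then 1 else 0) = 0"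
      by (simp add: gM)
    then show ?thesis
      by (simp add: F_def bordered_det_unit_col det_mat_cons_col)
  qed
  have "F (\<lambda>i. B i j) = 0" if "j < Suc (Suc k)" for j
    using that F_col F_w F_unit by (auto simp: B_def less_Suc_eq)
  then have "F v = 0"
    by (rule linear_form_zero_if_zero_on_nonsingular_columns[OF det_B F_linear])
  then show ?thesis
    by (simp add: F_def diff_eq_eq add.commute)
qed

lemma det_mat_add_col_multiples:
  fixes f g :: "nat \<Rightarrow> nat \<Rightarrow> 'a::comm_ring_1"
  assumes "p < N" and "l p = 0"
    and "\<And>i j. i < N \<Longrightarrow> j < N \<Longrightarrow> g i j = f i j + l j * f i p"
  shows "Determinant.det (Matrix.mat N N (\<lambda>(i, j). g i j)) =
    Determinant.det (Matrix.mat N N (\<lambda>(i, j). f i j))"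
proof -
  define A where "A m = Matrix.mat N N (\<lambda>(i, j). f i j + (if j < m then l j * f i p else 0))" for m
  have "Determinant.det (A (Suc m)) = Determinant.det (A m)" for m
  proof (cases "m < N \<and> m \<noteq> p")
    case True
    then have "A (Suc m) = addcol (l m) m p (A m)"
      unfolding A_def mat_addcol_def using assms(1,2) by (intro eq_matI) (auto simp: less_Suc_eq)
    then show ?thesis
      using True assms(1) by (simp add: A_def det_addcol)
  next
    case False
    then have "A (Suc m) = A m"
      unfolding A_def using assms(2) by (intro cong_mat) (auto simp: less_Suc_eq)
    then show ?thesis by simp
  qed
  then have "Determinant.det (A m) = Determinant.det (A 0)" for m
    by (induction m) simp_all
  moreover have "A N = Matrix.mat N N (\<lambda>(i, j). g i j)" and "A 0 = Matrix.mat N N (\<lambda>(i, j). f i j)"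
    unfolding A_def using assms(3) by (auto intro!: cong_mat)
  ultimately show ?thesis by metis
qed

lemma bordered_det_rank_one_update:
  "bordered_det k (\<lambda>i j. c i j - w i * w j) w = bordered_det k c w"
  unfolding bordered_det_def
  by (intro det_mat_add_col_multiples[where p = k and l = "\<lambda>j. if j < k then - w j else 0"]) auto

lemma bordered_det_cons_col_rank_one_update:
  assumes "0 < k"
  shows "bordered_det k (cons_col w (\<lambda>i j. c i j - w i * w j)) v = bordered_det k (cons_col w c) v"
  unfolding bordered_det_def using assms
  by (intro det_mat_add_col_multiples[where p = 0 and l = "\<lambda>j. if 0 < j \<and> j < k then - w (j - 1) else 0"])
    (auto simp: cons_col_def)

section \<open>Moments as integrals over the unit square\<close>

lemma sets_borel_unit_square: "{0<..<1::real} \<times> {0<..<1::real} \<in> sets (borel \<Otimes>\<^sub>M borel)"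
  unfolding borel_prod by (intro borel_open open_Times) auto

lemma integrable_lborel_product:
  fixes f g :: "real \<Rightarrow> real"
  assumes f: "integrable lborel f" and g: "integrable lborel g"
  shows "integrable lborel (\<lambda>p::real \<times> real. f (fst p) * g (snd p))"
proof -
  have [measurable]: "f \<in> borel_measurable lborel" "g \<in> borel_measurable lborel"
    using f g by auto
  have "integrable (lborel \<Otimes>\<^sub>M lborel) (\<lambda>p::real \<times> real. f (fst p) * g (snd p))"
  proof (rule lborel_pair.Fubini_integrable)
    show "integrable lborel (\<lambda>x. \<integral>y. norm (f (fst (x, y)) * g (snd (x, y))) \<partial>lborel)"
      using f by (simp add: abs_mult integrable_mult_left)
    show "AE x in lborel. integrable lborel (\<lambda>y. f (fst (x, y)) * g (snd (x, y)))"
      using g by simp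
  qed measurable
  then show ?thesis by (simp add: lborel_prod)
qed

lemma integral_lborel_product:
  fixes f g :: "real \<Rightarrow> real"
  assumes "integrable lborel f" and "integrable lborel g"
  shows "(\<integral>p. f (fst p) * g (snd p) \<partial>lborel) = integral\<^sup>L lborel f * integral\<^sup>L lborel g"
proof -
  have "integrable (lborel \<Otimes>\<^sub>M lborel) (\<lambda>p::real \<times> real. f (fst p) * g (snd p))"
    using integrable_lborel_product[OF assms] by (simp add: lborel_prod)
  then have "(\<integral>p. f (fst p) * g (snd p) \<partial>(lborel \<Otimes>\<^sub>M lborel)) =
      (\<integral>x. (\<integral>y. f (fst (x, y)) * g (snd (x, y)) \<partial>lborel) \<partial>lborel)"
    by (rule lborel_pair.integral_fst'[symmetric])
  then show ?thesis by (simp add: lborel_prod)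
qed

lemma integrable_continuous_on_01:
  fixes f :: "real \<Rightarrow> real"
  assumes "continuous_on {0..1} f"
  shows "integrable lborel (\<lambda>x. indicator {0<..<1} x * f x)"
proof -
  have "set_integrable lborel {0<..<1} f"
    by (rule set_integrable_subset[OF borel_integrable_atLeastAtMost'[OF assms]]) auto
  then show ?thesis unfolding set_integrable_def by simp
qed

lemma integrable_inverse_sqrt_01: "integrable lborel (\<lambda>x::real. indicator {0<..<1} x * (1 / sqrt x))"
proof -
  have "(\<lambda>x::real. x powr (-1/2)) integrable_on {0<..1}"
    by (rule integrable_on_powr_from_0') auto
  then have "set_integrable lebesgue {0<..1} (\<lambda>x::real. x powr (-1/2))"
    by (rule nonnegative_absolutely_integrable_1) auto
  then have "integrable lborel (\<lambda>x::real. indicator {0<..1} x * x powr (-1/2))"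
    unfolding set_integrable_def by (subst (asm) integrable_completion) auto
  then show ?thesis
  proof (rule Bochner_Integration.integrable_bound)
    show "(\<lambda>x::real. indicator {0<..<1} x * (1 / sqrt x)) \<in> borel_measurable lborel"
      using borel_measurable_continuous_on_indicator[of "{0<..<1}" "\<lambda>x. 1 / sqrt x"]
      by (auto intro!: continuous_intros)
    show "AE x in lborel. norm (indicator {0<..<1} x * (1 / sqrt x)) \<le>
        norm (indicator {0<..1} x * x powr (-1/2) :: real)"
      by (auto simp: indicator_def powr_minus_divide powr_half_sqrt)
  qed
qed

lemma inverse_add_le_inverse_sqrt_mult:
  fixes x y :: real
  assumes "0 < x" and "0 < y"
  shows "1 / (x + y) \<le> 1 / sqrt x * (1 / sqrt y)"
proof -
  have "0 \<le> (sqrt x - sqrt y)\<^sup>2"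
    by simp
  then have "2 * (sqrt x * sqrt y) \<le> x + y"
    using assms by (simp add: power2_eq_square algebra_simps)
  then show ?thesis
    using assms by (simp add: divide_simps)
qed

text \<open>The kernel \<open>1 / (x + y)\<close> is dominated by \<open>1 / sqrt x * 1 / sqrt y\<close>, which is integrable.\<close>
lemma integrable_unit_square_kernel:
  fixes u v :: "real \<Rightarrow> real"
  assumes [measurable]: "u \<in> borel_measurable borel" "v \<in> borel_measurable borel"
    and u: "\<And>x. x \<in> {0<..<1} \<Longrightarrow> \<bar>u x\<bar> \<le> C" and v: "\<And>y. y \<in> {0<..<1} \<Longrightarrow> \<bar>v y\<bar> \<le> D"
  shows "integrable lborel (\<lambda>p::real \<times> real.
    indicator ({0<..<1} \<times> {0<..<1}) p * (u (fst p) * v (snd p) / (fst p + snd p)))"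
proof (rule Bochner_Integration.integrable_bound)
  let ?r = "\<lambda>x::real. indicator {0<..<1} x * (1 / sqrt x)"
  show "integrable lborel (\<lambda>p::real \<times> real. C * D * (?r (fst p) * ?r (snd p)))"
    by (intro integrable_mult_right integrable_lborel_product integrable_inverse_sqrt_01)
  have [measurable]: "{0<..<1::real} \<times> {0<..<1::real} \<in> sets (borel \<Otimes>\<^sub>M borel)"
    by (rule sets_borel_unit_square)
  have "(\<lambda>p::real \<times> real. indicator ({0<..<1} \<times> {0<..<1}) p * (u (fst p) * v (snd p) / (fst p + snd p)))
      \<in> borel_measurable (borel \<Otimes>\<^sub>M borel)"
    by measurable
  then show "(\<lambda>p::real \<times> real. indicator ({0<..<1} \<times> {0<..<1}) p * (u (fst p) * v (snd p) / (fst p + snd p)))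
      \<in> borel_measurable lborel"
    by (simp add: borel_prod)
  have "norm (indicator ({0<..<1} \<times> {0<..<1}) p * (u (fst p) * v (snd p) / (fst p + snd p)))
      \<le> norm (C * D * (?r (fst p) * ?r (snd p)))" for p :: "real \<times> real"
  proof (cases "p \<in> {0<..<1} \<times> {0<..<1}")
    case True
    obtain x y where p: "p = (x, y)" and x: "x \<in> {0<..<1}" and y: "y \<in> {0<..<1}"
      using True by auto
    have "\<bar>u x * v y\<bar> \<le> C * D"
      unfolding abs_mult using u[OF x] v[OF y] by (intro mult_mono) auto
    moreover have "1 / (x + y) \<le> 1 / sqrt x * (1 / sqrt y)"
      using x y by (intro inverse_add_le_inverse_sqrt_mult) auto
    ultimately have "\<bar>u x * v y\<bar> * (1 / (x + y)) \<le> C * D * (1 / sqrt x * (1 / sqrt y))"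
      using x y by (intro mult_mono) auto
    moreover have "0 \<le> C" "0 \<le> D"
      using u[OF x] v[OF y] by auto
    ultimately show ?thesis
      using x y by (simp add: p abs_mult)
  qed auto
  then show "AE p in lborel. norm (indicator ({0<..<1} \<times> {0<..<1}) p * (u (fst p) * v (snd p) / (fst p + snd p)))
      \<le> norm (C * D * (?r (fst p) * ?r (snd p)))"
    by simp
qed

definition weighted_monomial :: "nat \<Rightarrow> nat \<Rightarrow> nat \<Rightarrow> real \<Rightarrow> real" where
  "weighted_monomial s t i x = x ^ (s + i) * ((1 - x) / (1 + x)) ^ t"

lemma abs_weighted_monomial_le_1:
  assumes "x \<in> {0<..<1}"
  shows "\<bar>weighted_monomial s t i x\<bar> \<le> 1"
proof -
  have "\<bar>weighted_monomial s t i x\<bar> = x ^ (s + i) * ((1 - x) / (1 + x)) ^ t"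
    using assms by (auto simp: weighted_monomial_def abs_mult)
  also have "\<dots> \<le> 1 * 1"
    using assms by (intro mult_mono power_le_one) (auto simp: divide_simps)
  finally show ?thesis by simp
qed

lemma weighted_monomial_Suc:
  "weighted_monomial s (Suc t) i x = weighted_monomial s t i x * ((1 - x) / (1 + x))"
  by (simp add: weighted_monomial_def)

lemma mmom_eq_integral:
  "mmom s t i j = (\<integral>p. indicator ({0<..<1} \<times> {0<..<1}) p *
     (weighted_monomial s t i (fst p) * weighted_monomial s t j (snd p) / (fst p + snd p)) \<partial>lborel)"
  unfolding mmom_def set_lebesgue_integral_def weighted_monomial_def
  by (intro Bochner_Integration.integral_cong) (simp_all add: field_simps)

lemma integrable_mmom_integrand:
  "integrable lborel (\<lambda>p. indicator ({0<..<1} \<times> {0<..<1}) p *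
     (weighted_monomial s t i (fst p) * weighted_monomial s t j (snd p) / (fst p + snd p)))"
  using abs_weighted_monomial_le_1
  by (intro integrable_unit_square_kernel[where C = 1 and D = 1]) (auto simp: weighted_monomial_def)

lemma mmom_rank_one_step: "mmom s (t + 1) i j = mmom s t i j - phi s t i * phi s t j"
proof -
  let ?S = "{0<..<1::real} \<times> {0<..<1::real}" and ?u = "weighted_monomial s t"
  define G where "G = (\<lambda>p::real \<times> real. indicator {0<..<1} (fst p) * (?u i (fst p) / (1 + fst p)) *
    (indicator {0<..<1} (snd p) * (?u j (snd p) / (1 + snd p))))"
  have single_integrable: "integrable lborel (\<lambda>x. indicator {0<..<1} x * (?u a x / (1 + x)))" for a
    unfolding weighted_monomial_def by (intro integrable_continuous_on_01 continuous_intros) auto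
  have G_integrable: "integrable lborel G"
    unfolding G_def by (rule integrable_lborel_product[OF single_integrable single_integrable])
  have G_integral: "integral\<^sup>L lborel G = phi s t i * phi s t j / 2"
    unfolding G_def integral_lborel_product[OF single_integrable single_integrable]
    by (simp add: phi_def set_lebesgue_integral_def weighted_monomial_def)
  have "mmom s (t + 1) i j = (\<integral>p. indicator ?S p * (?u i (fst p) * ?u j (snd p) / (fst p + snd p)) - 2 * G p \<partial>lborel)"
  proof (unfold mmom_eq_integral, intro Bochner_Integration.integral_cong refl)
    fix p :: "real \<times> real"
    show "indicator ?S p * (weighted_monomial s (t + 1) i (fst p) * weighted_monomial s (t + 1) j (snd p) / (fst p + snd p)) =
        indicator ?S p * (?u i (fst p) * ?u j (snd p) / (fst p + snd p)) - 2 * G p"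
    proof (cases "p \<in> ?S")
      case True
      then obtain x y where p: "p = (x, y)" and "0 < x" and "0 < y"
        by auto
      have "1 + x \<noteq> 0" "1 + y \<noteq> 0" "x + y \<noteq> 0"
        using \<open>0 < x\<close> \<open>0 < y\<close> by auto
      then have "?u i x * ((1 - x) / (1 + x)) * (?u j y * ((1 - y) / (1 + y))) / (x + y) =
          ?u i x * ?u j y / (x + y) - 2 * (?u i x / (1 + x) * (?u j y / (1 + y)))"
        by (simp add: divide_simps) (simp add: algebra_simps)
      then show ?thesis
        using True by (simp add: p G_def weighted_monomial_Suc)
    qed (auto simp: G_def indicator_def mem_Times_iff)
  qed
  then show ?thesis
    using integrable_mmom_integrand G_integrable G_integral by (simp add: mmom_eq_integral)
qed

lemma mmom_quadratic_form:
  "(\<Sum>i<k. \<Sum>j<k. v i * v j * mmom s t i j) =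
    (\<integral>p. indicator ({0<..<1} \<times> {0<..<1}) p *
      ((\<Sum>i<k. v i * weighted_monomial s t i (fst p)) * (\<Sum>j<k. v j * weighted_monomial s t j (snd p)) /
        (fst p + snd p)) \<partial>lborel)"
proof -
  define F where "F i j p = indicator ({0<..<1} \<times> {0<..<1}) p *
    (weighted_monomial s t i (fst p) * weighted_monomial s t j (snd p) / (fst p + snd p))"
    for i j and p :: "real \<times> real"
  have F_integrable: "integrable lborel (F i j)" for i j
    unfolding F_def[abs_def] by (rule integrable_mmom_integrand)
  have "mmom s t i j = integral\<^sup>L lborel (F i j)" for i j
    unfolding mmom_eq_integral F_def[abs_def] ..
  then have "(\<Sum>i<k. \<Sum>j<k. v i * v j * mmom s t i j) = (\<Sum>i<k. \<Sum>j<k. \<integral>p. v i * v j * F i j p \<partial>lborel)"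
    by simp
  also have "\<dots> = (\<integral>p. (\<Sum>i<k. \<Sum>j<k. v i * v j * F i j p) \<partial>lborel)"
    using F_integrable by (simp add: Bochner_Integration.integral_sum)
  also have "\<dots> = (\<integral>p. indicator ({0<..<1} \<times> {0<..<1}) p *
      ((\<Sum>i<k. v i * weighted_monomial s t i (fst p)) * (\<Sum>j<k. v j * weighted_monomial s t j (snd p)) /
        (fst p + snd p)) \<partial>lborel)"
    unfolding F_def sum_product by (simp add: sum_distrib_left sum_divide_distrib ac_simps)
  finally show ?thesis .
qed

section \<open>Laplace transforms on the unit interval\<close>

lemma continuous_on_open_zero_if_AE_zero:
  fixes g :: "real \<Rightarrow> real"
  assumes "AE x in lborel. x \<in> U \<longrightarrow> g x = 0" and "open U" and "continuous_on U g" and "x \<in> U"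
  shows "g x = 0"
proof (rule ccontr)
  assume "g x \<noteq> 0"
  moreover have "isCont g x"
    using assms(2-4) by (simp add: continuous_on_eq_continuous_at)
  ultimately obtain e where "e > 0" and e: "\<And>y. dist x y < e \<Longrightarrow> g y \<noteq> 0"
    using continuous_at_avoid[of x g 0] by auto
  obtain e' where "e' > 0" and e': "ball x e' \<subseteq> U"
    using assms(2,4) open_contains_ball by blast
  define d where "d = min e e'"
  have "0 < d"
    using \<open>e > 0\<close> \<open>e' > 0\<close> by (simp add: d_def)
  from assms(1) obtain N where N: "{y \<in> space lborel. \<not> (y \<in> U \<longrightarrow> g y = 0)} \<subseteq> N"
      "emeasure lborel N = 0" "N \<in> sets lborel"
    by (rule AE_E)
  have "{x - d<..<x + d} \<subseteq> N"
  proof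
    fix y assume "y \<in> {x - d<..<x + d}"
    then have "dist x y < d"
      by (auto simp: dist_real_def)
    then have "y \<in> U" and "g y \<noteq> 0"
      using e e' by (auto simp: d_def)
    then show "y \<in> N"
      using N(1) by auto
  qed
  then have "emeasure lborel {x - d<..<x + d} \<le> emeasure lborel N"
    by (rule emeasure_mono[OF _ N(3)])
  then show False
    using N(2) \<open>0 < d\<close> by simp
qed

lemma abs_exp_minus_diff_le:
  fixes a b :: real
  assumes "0 \<le> a" and "0 \<le> b"
  shows "\<bar>exp (- a) - exp (- b)\<bar> \<le> \<bar>a - b\<bar>"
proof -
  have "\<bar>exp (- a) - exp (- b)\<bar> \<le> b - a" if "0 \<le> a" "a \<le> b" for a b :: real
  proof -
    have "\<bar>exp (- a) - exp (- b)\<bar> = exp (- a) * (1 - exp (- (b - a)))"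
      using that by (simp add: algebra_simps flip: exp_add)
    also have "\<dots> \<le> 1 * (b - a)"
    proof (intro mult_mono)
      show "1 - exp (- (b - a)) \<le> b - a"
        using exp_ge_add_one_self[of "- (b - a)"] by linarith
    qed (use that in auto)
    finally show ?thesis by simp
  qed
  from this[of a b] this[of b a] show ?thesis
    using assms by (cases "a \<le> b") (auto simp: abs_minus_commute)
qed

lemma exp_mscale_0i:
  fixes u :: real
  assumes "0 < u"
  shows integrable_exp_mscale_0i: "integrable lborel (\<lambda>r. indicator {0<..} r * exp (- (r * u)))"
    and integral_exp_mscale_0i: "(\<integral>r. indicator {0<..} r * exp (- (r * u)) \<partial>lborel) = 1 / u"
  using integrable_I0i_exp_mscale[OF assms] LBINT_I0i_exp_mscale[OF assms]
  by (simp_all add: set_integrable_def interval_lebesgue_integral_0_infty set_lebesgue_integral_def)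

lemma sets_lborel_pair_real_triple:
  "sets (lborel \<Otimes>\<^sub>M lborel :: ((real \<times> real) \<times> real) measure) = sets ((borel \<Otimes>\<^sub>M borel) \<Otimes>\<^sub>M borel)"
proof (rule sets_pair_measure_cong)
  show "sets (lborel :: (real \<times> real) measure) = sets (borel \<Otimes>\<^sub>M borel)"
    by (subst borel_prod) simp
qed simp

definition laplace01 :: "(real \<Rightarrow> real) \<Rightarrow> real \<Rightarrow> real" where
  "laplace01 P r = (\<integral>x. indicator {0<..<1} x * (P x * exp (- (r * x))) \<partial>lborel)"

context
  fixes P :: "real \<Rightarrow> real" and C :: real
  assumes P_measurable [measurable]: "P \<in> borel_measurable borel"
    and P_bounded: "\<And>x. x \<in> {0<..<1} \<Longrightarrow> \<bar>P x\<bar> \<le> C"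
begin

lemma integrable_laplace01_integrand:
  assumes "0 \<le> r"
  shows "integrable lborel (\<lambda>x. indicator {0<..<1} x * (P x * exp (- (r * x))))"
proof (rule Bochner_Integration.integrable_bound)
  show "integrable lborel (\<lambda>x::real. indicator {0<..<1} x * C)"
    by (intro integrable_continuous_on_01 continuous_on_const)
  have "\<bar>P x\<bar> * exp (- (r * x)) \<le> C * 1" if "x \<in> {0<..<1}" for x
    using P_bounded[OF that] that assms by (intro mult_mono) auto
  then show "AE x in lborel. norm (indicator {0<..<1} x * (P x * exp (- (r * x))))
      \<le> norm (indicator {0<..<1} x * C)"
    using P_bounded[of "1/2"] by (intro AE_I2) (auto simp: indicator_def abs_mult)
qed measurable

lemma lipschitz_laplace01: "C-lipschitz_on {0..} (laplace01 P)"
proof (rule lipschitz_onI)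
  show "0 \<le> C"
    using P_bounded[of "1/2"] by auto
  fix r r' :: real
  assume "r \<in> {0..}" and "r' \<in> {0..}"
  then have r: "0 \<le> r" "0 \<le> r'"
    by auto
  have bound: "\<bar>indicator {0<..<1} x * (P x * exp (- (r * x))) - indicator {0<..<1} x * (P x * exp (- (r' * x)))\<bar>
      \<le> indicator {0<..<1} x * (C * \<bar>r - r'\<bar>)" for x :: real
  proof (cases "x \<in> {0<..<1}")
    case True
    have "\<bar>exp (- (r * x)) - exp (- (r' * x))\<bar> \<le> \<bar>r * x - r' * x\<bar>"
      using True r by (intro abs_exp_minus_diff_le) auto
    also have "\<dots> \<le> \<bar>r - r'\<bar>"
      using True by (simp add: abs_mult mult_left_le flip: left_diff_distrib)
    finally have "\<bar>P x\<bar> * \<bar>exp (- (r * x)) - exp (- (r' * x))\<bar> \<le> C * \<bar>r - r'\<bar>"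
      using P_bounded[OF True] by (intro mult_mono) auto
    then show ?thesis
      using True by (simp add: abs_mult flip: right_diff_distrib)
  qed simp
  have "\<bar>\<integral>x. indicator {0<..<1} x * (P x * exp (- (r * x))) - indicator {0<..<1} x * (P x * exp (- (r' * x))) \<partial>lborel\<bar>
      \<le> (\<integral>x. indicator {0<..<1::real} x * (C * \<bar>r - r'\<bar>) \<partial>lborel)"
  proof (rule integral_abs_bound_integral)
    show "integrable lborel (\<lambda>x. indicator {0<..<1} x * (P x * exp (- (r * x)))
        - indicator {0<..<1} x * (P x * exp (- (r' * x))))"
      using r by (intro Bochner_Integration.integrable_diff integrable_laplace01_integrand)
    show "integrable lborel (\<lambda>x::real. indicator {0<..<1} x * (C * \<bar>r - r'\<bar>))"
      by (intro integrable_continuous_on_01 continuous_on_const)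
  qed (rule bound)
  moreover have "laplace01 P r - laplace01 P r' = (\<integral>x. indicator {0<..<1} x * (P x * exp (- (r * x)))
      - indicator {0<..<1} x * (P x * exp (- (r' * x))) \<partial>lborel)"
    unfolding laplace01_def using r integrable_laplace01_integrand by simp
  ultimately have "\<bar>laplace01 P r - laplace01 P r'\<bar> \<le> C * \<bar>r - r'\<bar>"
    by (simp add: mult.commute)
  then show "dist (laplace01 P r) (laplace01 P r') \<le> C * dist r r'"
    by (simp add: dist_real_def)
qed

lemma continuous_on_laplace01: "continuous_on {0<..} (laplace01 P)"
  using lipschitz_on_continuous_on[OF lipschitz_laplace01] by (rule continuous_on_subset) auto

lemma integrable_laplace_kernel:
  "integrable (lborel \<Otimes>\<^sub>M lborel) (\<lambda>(z, r). indicator ({0<..<1} \<times> {0<..<1}) z * indicator {0<..} r *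
     (P (fst z) * P (snd z) * exp (- (r * (fst z + snd z)))))"
proof (rule lborel_pair.Fubini_integrable)
  have [measurable]: "{0<..<1::real} \<times> {0<..<1::real} \<in> sets (borel \<Otimes>\<^sub>M borel)"
    by (rule sets_borel_unit_square)
  show "(\<lambda>(z, r). indicator ({0<..<1} \<times> {0<..<1}) z * indicator {0<..} r *
      (P (fst z) * P (snd z) * exp (- (r * (fst z + snd z))))) \<in> borel_measurable (lborel \<Otimes>\<^sub>M lborel)"
    unfolding measurable_cong_sets[OF sets_lborel_pair_real_triple refl] by measurable
  have "(\<integral>r. norm (indicator ({0<..<1} \<times> {0<..<1}) z * indicator {0<..} r *
      (P (fst z) * P (snd z) * exp (- (r * (fst z + snd z))))) \<partial>lborel) =
      indicator ({0<..<1} \<times> {0<..<1}) z * (\<bar>P (fst z)\<bar> * \<bar>P (snd z)\<bar> / (fst z + snd z))" for z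
  proof (cases "z \<in> {0<..<1} \<times> {0<..<1}")
    case True
    then have "0 < fst z + snd z"
      by auto
    have "(\<integral>r. norm (indicator ({0<..<1} \<times> {0<..<1}) z * indicator {0<..} r *
        (P (fst z) * P (snd z) * exp (- (r * (fst z + snd z))))) \<partial>lborel) =
        (\<integral>r. \<bar>P (fst z)\<bar> * \<bar>P (snd z)\<bar> * (indicator {0<..} r * exp (- (r * (fst z + snd z)))) \<partial>lborel)"
      using True by (intro Bochner_Integration.integral_cong) (auto simp: abs_mult indicator_def)
    then show ?thesis
      using True integral_exp_mscale_0i[OF \<open>0 < fst z + snd z\<close>] by simp
  qed simp
  moreover have "integrable lborel (\<lambda>z::real \<times> real. indicator ({0<..<1} \<times> {0<..<1}) z *
      (\<bar>P (fst z)\<bar> * \<bar>P (snd z)\<bar> / (fst z + snd z)))"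
    using P_bounded by (intro integrable_unit_square_kernel[where C = C and D = C]) auto
  ultimately show "integrable lborel (\<lambda>z. \<integral>r. norm ((\<lambda>(z, r). indicator ({0<..<1} \<times> {0<..<1}) z *
      indicator {0<..} r * (P (fst z) * P (snd z) * exp (- (r * (fst z + snd z))))) (z, r)) \<partial>lborel)"
    by simp
  have "integrable lborel (\<lambda>r. indicator ({0<..<1} \<times> {0<..<1}) z * indicator {0<..} r *
      (P (fst z) * P (snd z) * exp (- (r * (fst z + snd z)))))" for z :: "real \<times> real"
  proof (cases "z \<in> {0<..<1} \<times> {0<..<1}")
    case True
    then have "0 < fst z + snd z"
      by auto
    from integrable_mult_right[OF integrable_exp_mscale_0i[OF this], of "P (fst z) * P (snd z)"]
    show ?thesis
      using True by (simp add: ac_simps)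
  qed simp
  then show "AE z in lborel. integrable lborel (\<lambda>r. (\<lambda>(z, r). indicator ({0<..<1} \<times> {0<..<1}) z *
      indicator {0<..} r * (P (fst z) * P (snd z) * exp (- (r * (fst z + snd z))))) (z, r))"
    by simp
qed

text \<open>By Fubini and \<open>1 / (x + y) = \<integral>\<^sub>0\<^sup>\<infinity> exp (- r (x + y)) dr\<close>.\<close>
lemma unit_square_kernel_eq_integral_laplace01_sq:
  shows integrable_laplace01_sq: "integrable lborel (\<lambda>r. indicator {0<..} r * (laplace01 P r)\<^sup>2)"
    and unit_square_kernel_eq_laplace01_sq:
      "(\<integral>p. indicator ({0<..<1} \<times> {0<..<1}) p * (P (fst p) * P (snd p) / (fst p + snd p)) \<partial>lborel) =
       (\<integral>r. indicator {0<..} r * (laplace01 P r)\<^sup>2 \<partial>lborel)"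
proof -
  define h where "h z r = indicator ({0<..<1} \<times> {0<..<1}) z * indicator {0<..} r *
    (P (fst z) * P (snd z) * exp (- (r * (fst z + snd z))))" for z :: "real \<times> real" and r :: real
  have h_integrable: "integrable (lborel \<Otimes>\<^sub>M lborel) (\<lambda>(z, r). h z r)"
    unfolding h_def by (rule integrable_laplace_kernel)
  have inner: "(\<integral>r. h z r \<partial>lborel) = indicator ({0<..<1} \<times> {0<..<1}) z * (P (fst z) * P (snd z) / (fst z + snd z))"
    for z
  proof (cases "z \<in> {0<..<1} \<times> {0<..<1}")
    case True
    then have "0 < fst z + snd z"
      by auto
    have "(\<integral>r. h z r \<partial>lborel) =
        (\<integral>r. P (fst z) * P (snd z) * (indicator {0<..} r * exp (- (r * (fst z + snd z)))) \<partial>lborel)"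
      using True by (intro Bochner_Integration.integral_cong) (auto simp: h_def)
    then show ?thesis
      using True integral_exp_mscale_0i[OF \<open>0 < fst z + snd z\<close>] by simp
  qed (simp add: h_def)
  have outer: "(\<integral>z. h z r \<partial>lborel) = indicator {0<..} r * (laplace01 P r)\<^sup>2" for r
  proof (cases "0 < r")
    case True
    have "(\<integral>z. h z r \<partial>lborel) = (\<integral>z. indicator {0<..<1} (fst z) * (P (fst z) * exp (- (r * fst z))) *
        (indicator {0<..<1} (snd z) * (P (snd z) * exp (- (r * snd z)))) \<partial>lborel)"
      unfolding h_def using True
      by (intro Bochner_Integration.integral_cong)
         (simp_all add: indicator_def mem_Times_iff distrib_left algebra_simps flip: exp_add)
    also have "\<dots> = (laplace01 P r)\<^sup>2"
      unfolding laplace01_def power2_eq_square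
      using integrable_laplace01_integrand True by (intro integral_lborel_product) auto
    finally show ?thesis
      using True by simp
  qed (simp add: h_def)
  show "integrable lborel (\<lambda>r. indicator {0<..} r * (laplace01 P r)\<^sup>2)"
    using lborel_pair.integrable_snd[OF h_integrable] by (simp add: outer)
  show "(\<integral>p. indicator ({0<..<1} \<times> {0<..<1}) p * (P (fst p) * P (snd p) / (fst p + snd p)) \<partial>lborel) =
      (\<integral>r. indicator {0<..} r * (laplace01 P r)\<^sup>2 \<partial>lborel)"
    using lborel_pair.Fubini_integral[OF h_integrable] by (simp add: outer inner)
qed

end

lemma exp_polynomial_approximation:
  fixes P :: "real \<Rightarrow> real"
  assumes "continuous_on {0..1} P" and "0 < e"
  obtains a n where "\<And>x. x \<in> {0..1} \<Longrightarrow> \<bar>P x - (\<Sum>i\<le>n. a i * exp (- x) ^ i)\<bar> < e"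
proof -
  have "continuous_on {exp (-1)..1} (\<lambda>z. P (- ln z))"
  proof (rule continuous_on_compose2[OF assms(1)])
    show "continuous_on {exp (-1)..1} (\<lambda>z::real. - ln z)"
      by (intro continuous_intros) (auto intro: order_less_le_trans[OF exp_gt_zero])
    have "- ln z \<in> {0..1}" if "z \<in> {exp (-1)..1}" for z :: real
    proof -
      have "0 < z"
        using that order_less_le_trans[OF exp_gt_zero, of "-1" z] by auto
      then show ?thesis
        using that ln_le_cancel_iff[of "exp (-1)" z] by auto
    qed
    then show "(\<lambda>z::real. - ln z) ` {exp (-1)..1} \<subseteq> {0..1}"
      by auto
  qed
  then obtain g where "real_polynomial_function g" and g: "\<And>z. z \<in> {exp (-1)..1} \<Longrightarrow> \<bar>P (- ln z) - g z\<bar> < e"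
    using Stone_Weierstrass_real_polynomial_function[OF compact_Icc _ assms(2)] by blast
  obtain a n where "g = (\<lambda>z. \<Sum>i\<le>n. a i * z ^ i)"
    using \<open>real_polynomial_function g\<close> unfolding real_polynomial_function_iff_sum by blast
  show ?thesis
  proof (rule that)
    fix x :: real
    assume "x \<in> {0..1}"
    then have "exp (- x) \<in> {exp (-1)..1}"
      by auto
    then show "\<bar>P x - (\<Sum>i\<le>n. a i * exp (- x) ^ i)\<bar> < e"
      using g \<open>g = (\<lambda>z. \<Sum>i\<le>n. a i * z ^ i)\<close> by fastforce
  qed
qed

lemma laplace01_orthogonal_exp_polynomial:
  fixes P :: "real \<Rightarrow> real"
  assumes [measurable]: "P \<in> borel_measurable borel" and "\<And>x. x \<in> {0<..<1} \<Longrightarrow> \<bar>P x\<bar> \<le> C"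
    and laplace_zero: "\<And>m::nat. laplace01 P (real m + 1) = 0"
  shows "(\<integral>x. indicator {0<..<1} x * (P x * exp (- x) * (\<Sum>i\<le>n. a i * exp (- x) ^ i)) \<partial>lborel) = 0"
proof -
  have "(\<integral>x. indicator {0<..<1} x * (P x * exp (- x) * (\<Sum>i\<le>n. a i * exp (- x) ^ i)) \<partial>lborel) =
      (\<integral>x. (\<Sum>i\<le>n. a i * (indicator {0<..<1} x * (P x * exp (- ((real i + 1) * x))))) \<partial>lborel)"
  proof (intro Bochner_Integration.integral_cong)
    fix x :: real
    have "exp (- ((real i + 1) * x)) = exp (- x) * exp (- x) ^ i" for i
      by (simp add: algebra_simps flip: exp_of_nat_mult exp_add)
    then show "indicator {0<..<1} x * (P x * exp (- x) * (\<Sum>i\<le>n. a i * exp (- x) ^ i)) =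
        (\<Sum>i\<le>n. a i * (indicator {0<..<1} x * (P x * exp (- ((real i + 1) * x)))))"
      by (simp add: sum_distrib_left ac_simps)
  qed simp
  also have "\<dots> = (\<Sum>i\<le>n. a i * laplace01 P (real i + 1))"
    unfolding laplace01_def using integrable_laplace01_integrand[of P C, OF assms(1,2)]
    by (subst Bochner_Integration.integral_sum) auto
  finally show ?thesis
    by (simp add: laplace_zero)
qed

text \<open>Approximate \<open>P\<close> uniformly by polynomials in \<open>e\<^sup>-\<^sup>x\<close>, to which \<open>P(x) e\<^sup>-\<^sup>x\<close> is orthogonal.\<close>
lemma integral_sq_exp_zero_if_laplace01_nat_zero:
  fixes P :: "real \<Rightarrow> real"
  assumes [measurable]: "P \<in> borel_measurable borel" and P_continuous: "continuous_on {0..1} P"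
    and laplace_zero: "\<And>m::nat. laplace01 P (real m + 1) = 0"
  shows "(\<integral>x. indicator {0<..<1} x * (P x * P x * exp (- x)) \<partial>lborel) = 0"
    (is "?J = 0")
proof -
  obtain C where "0 \<le> C" and C: "\<And>x. x \<in> {0..1} \<Longrightarrow> \<bar>P x\<bar> \<le> C"
    using continuous_on_compact_bound[OF compact_Icc P_continuous] by auto
  have J_integrable: "integrable lborel (\<lambda>x. indicator {0<..<1} x * (P x * P x * exp (- x)))"
    by (intro integrable_continuous_on_01 continuous_intros P_continuous)
  have J_bound: "?J \<le> C * e" if "0 < e" for e
  proof -
    obtain a n where approx: "\<And>x. x \<in> {0..1} \<Longrightarrow> \<bar>P x - (\<Sum>i\<le>n. a i * exp (- x) ^ i)\<bar> < e"
      using exp_polynomial_approximation[OF P_continuous \<open>0 < e\<close>] by blast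
    define Q where "Q x = P x * exp (- x) * (\<Sum>i\<le>n. a i * exp (- x) ^ i)" for x
    have Q_integrable: "integrable lborel (\<lambda>x. indicator {0<..<1} x * Q x)"
      unfolding Q_def by (intro integrable_continuous_on_01 continuous_intros P_continuous)
    have Q_integral: "(\<integral>x. indicator {0<..<1} x * Q x \<partial>lborel) = 0"
      unfolding Q_def using C by (intro laplace01_orthogonal_exp_polynomial[where C = C] laplace_zero) auto
    have "\<bar>indicator {0<..<1} x * (P x * P x * exp (- x)) - indicator {0<..<1} x * Q x\<bar>
        \<le> indicator {0<..<1} x * (C * e)" for x
    proof (cases "x \<in> {0<..<1}")
      case True
      have "\<bar>P x\<bar> * exp (- x) * \<bar>P x - (\<Sum>i\<le>n. a i * exp (- x) ^ i)\<bar> \<le> C * 1 * e"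
        using C[of x] approx[of x] True by (intro mult_mono) auto
      moreover have "P x * P x * exp (- x) - Q x = P x * exp (- x) * (P x - (\<Sum>i\<le>n. a i * exp (- x) ^ i))"
        by (simp add: Q_def algebra_simps)
      ultimately show ?thesis
        using True by (simp add: abs_mult flip: right_diff_distrib)
    qed simp
    then have "\<bar>\<integral>x. indicator {0<..<1} x * (P x * P x * exp (- x)) - indicator {0<..<1} x * Q x \<partial>lborel\<bar>
        \<le> (\<integral>x. indicator {0<..<1::real} x * (C * e) \<partial>lborel)"
      by (intro integral_abs_bound_integral Bochner_Integration.integrable_diff J_integrable Q_integrable
          integrable_continuous_on_01 continuous_on_const)
    then show ?thesis
      using J_integrable Q_integrable Q_integral by (simp add: mult.commute)
  qed
  have "?J \<le> 0"
  proof (rule field_le_epsilon)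
    fix e :: real
    assume "0 < e"
    then have "?J \<le> C * (e / (C + 1))"
      using \<open>0 \<le> C\<close> by (intro J_bound) simp
    also have "\<dots> \<le> e"
      using \<open>0 < e\<close> \<open>0 \<le> C\<close> by (simp add: divide_simps)
    finally show "?J \<le> 0 + e"
      by simp
  qed
  moreover have "0 \<le> ?J"
    by (intro integral_nonneg_AE AE_I2) (auto simp: indicator_def)
  ultimately show ?thesis
    by simp
qed

lemma laplace01_nat_zero_imp_zero:
  fixes P :: "real \<Rightarrow> real"
  assumes [measurable]: "P \<in> borel_measurable borel" and P_continuous: "continuous_on {0..1} P"
    and laplace_zero: "\<And>m::nat. laplace01 P (real m + 1) = 0"
    and "x \<in> {0<..<1}"
  shows "P x = 0"
proof -
  have "integrable lborel (\<lambda>x. indicator {0<..<1} x * (P x * P x * exp (- x)))"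
    by (intro integrable_continuous_on_01 continuous_intros P_continuous)
  then have "AE x in lborel. indicator {0<..<1} x * (P x * P x * exp (- x)) = 0"
    using integral_sq_exp_zero_if_laplace01_nat_zero[OF assms(1-3)]
    by (subst (asm) integral_nonneg_eq_0_iff_AE) (auto simp: indicator_def)
  then have "AE x in lborel. x \<in> {0<..<1} \<longrightarrow> P x * P x * exp (- x) = 0"
    by (auto elim!: AE_mp simp: indicator_def)
  then have "P x * P x * exp (- x) = 0"
    by (rule continuous_on_open_zero_if_AE_zero)
       (use assms(4) in \<open>auto intro!: continuous_intros continuous_on_subset[OF P_continuous]\<close>)
  then show "P x = 0"
    by simp
qed

lemma unit_square_kernel_zero_imp_zero:
  fixes P :: "real \<Rightarrow> real"
  assumes [measurable]: "P \<in> borel_measurable borel" and P_continuous: "continuous_on {0..1} P"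
    and kernel_zero: "(\<integral>p. indicator ({0<..<1} \<times> {0<..<1}) p * (P (fst p) * P (snd p) / (fst p + snd p)) \<partial>lborel) = 0"
    and "x \<in> {0<..<1}"
  shows "P x = 0"
proof -
  obtain C where "\<And>x. x \<in> {0..1} \<Longrightarrow> \<bar>P x\<bar> \<le> C"
    using continuous_on_compact_bound[OF compact_Icc P_continuous] by auto
  then have C: "\<And>x. x \<in> {0<..<1} \<Longrightarrow> \<bar>P x\<bar> \<le> C"
    by auto
  have "AE r in lborel. indicator {0<..} r * (laplace01 P r)\<^sup>2 = 0"
    using kernel_zero integrable_laplace01_sq[of P C, OF _ C] unit_square_kernel_eq_laplace01_sq[of P C, OF _ C]
    by (subst integral_nonneg_eq_0_iff_AE[symmetric]) (auto simp: indicator_def)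
  then have "AE r in lborel. r \<in> {0<..} \<longrightarrow> (laplace01 P r)\<^sup>2 = 0"
    by (auto elim!: AE_mp simp: indicator_def)
  then have "(laplace01 P (real m + 1))\<^sup>2 = 0" for m :: nat
    by (rule continuous_on_open_zero_if_AE_zero)
       (auto intro!: continuous_on_power continuous_on_laplace01[of P C, OF _ C])
  then show ?thesis
    using laplace01_nat_zero_imp_zero[OF assms(1) P_continuous _ assms(4)] by simp
qed

section \<open>Nonsingularity of the moment matrices\<close>

lemma polyfun_zero_on_interval_imp_coeffs_zero:
  fixes v :: "nat \<Rightarrow> real"
  assumes "a < b" and "\<And>x. x \<in> {a<..<b} \<Longrightarrow> (\<Sum>i<k. v i * x ^ i) = 0" and "i < k"
  shows "v i = 0"
proof -
  define c where "c i = (if i < k then v i else 0)" for i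
  have "(\<Sum>i\<le>k. c i * x ^ i) = (\<Sum>i<k. v i * x ^ i)" for x :: real
    by (simp add: c_def lessThan_Suc_atMost[symmetric])
  then have "{a<..<b} \<subseteq> {x. (\<Sum>i\<le>k. c i * x ^ i) = 0}"
    using assms(2) by auto
  then have "infinite {x. (\<Sum>i\<le>k. c i * x ^ i) = 0}"
    using infinite_Ioo[OF assms(1)] finite_subset by blast
  then have "\<forall>j\<le>k. c j = 0"
    using polyfun_finite_roots[of c k] by auto
  then show ?thesis
    using assms(3) unfolding c_def by (metis less_imp_le)
qed

lemma tau_nonzero: "tau s t k \<noteq> 0"
proof
  assume "tau s t k = 0"
  then obtain u where u: "u \<in> carrier_vec k" "u \<noteq> 0\<^sub>v k"
    and "Matrix.mat k k (\<lambda>(i, j). mmom s t i j) *\<^sub>v u = 0\<^sub>v k"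
    using det_0_iff_vec_prod_zero_field[of "Matrix.mat k k (\<lambda>(i, j). mmom s t i j)" k]
    unfolding tau_def by auto
  define v where "v = vec_index u"
  have kernel: "(\<Sum>j<k. mmom s t i j * v j) = 0" if "i < k" for i
  proof -
    have "vec_index (Matrix.mat k k (\<lambda>(i, j). mmom s t i j) *\<^sub>v u) i = 0"
      using \<open>Matrix.mat k k (\<lambda>(i, j). mmom s t i j) *\<^sub>v u = 0\<^sub>v k\<close> that by simp
    then show ?thesis
      using that u(1) by (simp add: v_def mult_mat_vec_def scalar_prod_def atLeast0LessThan)
  qed
  define Q where "Q x = (\<Sum>i<k. v i * weighted_monomial s t i x)" for x
  have "(\<Sum>i<k. \<Sum>j<k. v i * v j * mmom s t i j) = (\<Sum>i<k. v i * (\<Sum>j<k. mmom s t i j * v j))"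
    by (simp add: sum_distrib_left ac_simps)
  then have "(\<integral>p. indicator ({0<..<1} \<times> {0<..<1}) p * (Q (fst p) * Q (snd p) / (fst p + snd p)) \<partial>lborel) = 0"
    using kernel by (simp add: Q_def mmom_quadratic_form)
  moreover have "Q \<in> borel_measurable borel"
    unfolding Q_def[abs_def] weighted_monomial_def by measurable
  moreover have "continuous_on {0..1} Q"
    unfolding Q_def[abs_def] weighted_monomial_def
    by (intro continuous_intros) (auto simp: add_nonneg_eq_0_iff)
  ultimately have "Q x = 0" if "x \<in> {0<..<1}" for x
    using unit_square_kernel_zero_imp_zero that by blast
  moreover have "Q x = x ^ s * ((1 - x) / (1 + x)) ^ t * (\<Sum>i<k. v i * x ^ i)" for x
    unfolding Q_def weighted_monomial_def by (simp add: sum_distrib_left power_add ac_simps)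
  ultimately have "(\<Sum>i<k. v i * x ^ i) = 0" if "x \<in> {0<..<1}" for x
    using that by auto
  then have "v i = 0" if "i < k" for i
    using polyfun_zero_on_interval_imp_coeffs_zero[where a = 0 and b = 1 and v = v] that by auto
  then have "u = 0\<^sub>v k"
    using u(1) by (intro eq_vecI) (auto simp: v_def)
  with u(2) show False ..
qed

section \<open>The recurrence\<close>

lemma sigma_eq_bordered_det: "sigma s t m = bordered_det m (mmom s (t + 1)) (phi s t)"
proof -
  have rank_one: "mmom s (t + 1) = (\<lambda>i j. mmom s t i j - phi s t i * phi s t j)"
    by (intro ext) (rule mmom_rank_one_step)
  show ?thesis
    unfolding rank_one bordered_det_rank_one_update by (simp add: sigma_def bordered_det_def)
qed

lemma Rpoly_eq_bordered_det:
  assumes "n = Suc k"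
  shows "Rpoly s t n x =
    (-1) ^ k / sigma s t k * bordered_det n (cons_col (phi s t) (mmom s (t + 1))) (\<lambda>i. x ^ i)"
proof -
  have rank_one: "mmom s (t + 1) = (\<lambda>i j. mmom s t i j - phi s t i * phi s t j)"
    by (intro ext) (rule mmom_rank_one_step)
  have "Determinant.det (Matrix.mat (Suc k + 1) (Suc k + 1) (\<lambda>(i, j).
      if j = 0 then phi s t i else if j < Suc k then mmom s t i (j - 1) else x ^ i)) =
      bordered_det (Suc k) (cons_col (phi s t) (mmom s t)) (\<lambda>i. x ^ i)"
    unfolding bordered_det_def by (intro arg_cong[where f = Determinant.det] cong_mat) (auto simp: cons_col_def)
  then show ?thesis
    unfolding assms rank_one bordered_det_cons_col_rank_one_update[OF zero_less_Suc] by (simp add: Rpoly_def)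
qed

lemma Ppoly_eq_bordered_det: "Ppoly s t m x = bordered_det m (mmom s t) (\<lambda>i. x ^ i) / tau s t m"
  by (simp add: Ppoly_def bordered_det_def)

theorem proposition2p8:
  fixes s t n :: nat and x :: real
  assumes "n \<ge> 1" and "sigma s t (n - 1) \<noteq> 0"
  shows "Ppoly s (t + 1) n x = Rpoly s t n x - dcoef s t n * Ppoly s (t + 1) (n - 1) x"
proof -
  obtain k where n: "n = Suc k"
    using assms(1) by (cases n) auto
  then have k: "n - 1 = k"
    by simp
  let ?c = "mmom s (t + 1)" and ?X = "\<lambda>i::nat. x ^ i"
  have "sigma s t k * bordered_det n ?c ?X =
      (-1) ^ k * tau s (t + 1) n * bordered_det n (cons_col (phi s t) ?c) ?X + sigma s t n * bordered_det k ?c ?X"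
    unfolding n sigma_eq_bordered_det tau_def
    by (rule bordered_det_pluecker) (use assms(2) in \<open>simp add: n sigma_eq_bordered_det\<close>)
  then show ?thesis
    unfolding Ppoly_eq_bordered_det Rpoly_eq_bordered_det[OF n] dcoef_def k
    using assms(2)[unfolded k] tau_nonzero[of s "t + 1" n] tau_nonzero[of s "t + 1" k]
    by (simp add: field_simps)
qed

end
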